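(* Let $H$ be a graph and let $P_1, P_2$ be two internally vertex-disjoint paths in $H$ of the same length parity, both with endpoints $u$ and $v$, such that every internal vertex of $P_1$ and of $P_2$ has degree exactly $2$ in $H$. If $S$ is a minimum-size odd cycle transversal of $H$, then $S \cap (V(P_1) \cup V(P_2)) \subseteq \{u,v\}$.
   Context: An odd cycle transversal of $H$ is a set $S \subseteq V(H)$ such that $H - S$ is bipartite. *)

theory Defs
  imports Main
begin

definition graph :: "'a set \<Rightarrow> 'a set set \<Rightarrow> bool" where
  "graph V E \<longleftrightarrow> finite V \<and> (\<forall>e\<in>E. e \<subseteq> V \<and> card e = 2)"

definition degree :: "'a set set \<Rightarrow> 'a \<Rightarrow> nat" where
  "degree E v = card {e \<in> E. v \<in> e}"

definition is_path :: "'a set \<Rightarrow> 'a set set \<Rightarrow> 'a list \<Rightarrow> bool" where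
  "is_path V E p \<longleftrightarrow> p \<noteq> [] \<and> distinct p \<and> set p \<subseteq> V \<and>
     (\<forall>i. Suc i < length p \<longrightarrow> {p ! i, p ! Suc i} \<in> E)"

definition path_len :: "'a list \<Rightarrow> nat" where
  "path_len p = length p - 1"

definition internal_vertices :: "'a list \<Rightarrow> 'a set" where
  "internal_vertices p = set (butlast (tl p))"

definition bipartite :: "'a set \<Rightarrow> 'a set set \<Rightarrow> bool" where
  "bipartite V E \<longleftrightarrow> (\<exists>A B. A \<inter> B = {} \<and> A \<union> B = V \<and>
      (\<forall>e\<in>E. card (e \<inter> A) = 1 \<and> card (e \<inter> B) = 1))"

definition del_vertices_E :: "'a set set \<Rightarrow> 'a set \<Rightarrow> 'a set set" where
  "del_vertices_E E S = {e \<in> E. e \<inter> S = {}}"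

definition odd_cycle_transversal :: "'a set \<Rightarrow> 'a set set \<Rightarrow> 'a set \<Rightarrow> bool" where
  "odd_cycle_transversal V E S \<longleftrightarrow> S \<subseteq> V \<and> bipartite (V - S) (del_vertices_E E S)"

definition min_odd_cycle_transversal :: "'a set \<Rightarrow> 'a set set \<Rightarrow> 'a set \<Rightarrow> bool" where
  "min_odd_cycle_transversal V E S \<longleftrightarrow> odd_cycle_transversal V E S \<and>
     (\<forall>S'. odd_cycle_transversal V E S' \<longrightarrow> card S \<le> card S')"

end

theory Submission
  imports Defs
begin

text \<open>Let I be the set of internal vertices of the two paths and f a 2-colouring of H - S.
  Since the vertices of I have degree 2, they can be recoloured alternately along each path from u,
  and this is consistent at v whenever u or v stays deleted or f u, f v fit the common parity of
  the paths; then S - I is again a transversal, so a minimum S misses I. The colours fit when u or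
  v lies in S or when one path avoids S. Otherwise S meets both paths in I, in two distinct
  vertices, and replacing S \<inter> I by v gives a smaller transversal.\<close>

definition proper_colouring :: "('a \<Rightarrow> bool) \<Rightarrow> 'a set set \<Rightarrow> 'a set \<Rightarrow> bool" where
  "proper_colouring f E S \<longleftrightarrow> (\<forall>e\<in>E. e \<inter> S = {} \<longrightarrow> (\<forall>a\<in>e. \<forall>b\<in>e. a \<noteq> b \<longrightarrow> f a \<noteq> f b))"

lemma proper_colouringD:
  "proper_colouring f E S \<Longrightarrow> e \<in> E \<Longrightarrow> e \<inter> S = {} \<Longrightarrow> a \<in> e \<Longrightarrow> b \<in> e \<Longrightarrow> a \<noteq> b
    \<Longrightarrow> f a \<noteq> f b"
  unfolding proper_colouring_def by blast

lemma odd_cycle_transversal_iff_proper_colouring: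
  assumes "graph V E"
  shows "odd_cycle_transversal V E S \<longleftrightarrow> S \<subseteq> V \<and> (\<exists>f. proper_colouring f E S)"
proof
  assume oct: "odd_cycle_transversal V E S"
  then obtain A B where AB: "A \<union> B = V - S"
    and one: "\<forall>e\<in>del_vertices_E E S. card (e \<inter> A) = 1 \<and> card (e \<inter> B) = 1"
    unfolding odd_cycle_transversal_def bipartite_def by blast
  have "proper_colouring (\<lambda>x. x \<in> A) E S"
    unfolding proper_colouring_def
  proof (intro ballI impI)
    fix e a b assume e: "e \<in> E" "e \<inter> S = {}" and ab: "a \<in> e" "b \<in> e" "a \<noteq> b"
    have "e \<subseteq> A \<union> B" using assms e AB unfolding graph_def by auto
    moreover have "e \<in> del_vertices_E E S" using e unfolding del_vertices_E_def by simp
    then obtain za zb where "e \<inter> A = {za}" "e \<inter> B = {zb}"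
      using one by (meson card_1_singletonE)
    ultimately have "\<not> {a, b} \<subseteq> A" "\<not> {a, b} \<subseteq> B" using ab by (metis IntI insert_subset singletonD)+
    then show "(a \<in> A) \<noteq> (b \<in> A)" using \<open>e \<subseteq> A \<union> B\<close> ab by blast
  qed
  then show "S \<subseteq> V \<and> (\<exists>f. proper_colouring f E S)"
    using oct unfolding odd_cycle_transversal_def by blast
next
  assume "S \<subseteq> V \<and> (\<exists>f. proper_colouring f E S)"
  then obtain f where S: "S \<subseteq> V" and f: "proper_colouring f E S" by blast
  define A where "A = {x \<in> V - S. f x}"
  define B where "B = {x \<in> V - S. \<not> f x}"
  have "card (e \<inter> A) = 1 \<and> card (e \<inter> B) = 1" if "e \<in> del_vertices_E E S" for e
  proof -
    have e: "e \<in> E" "e \<inter> S = {}" using that unfolding del_vertices_E_def by auto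
    then have "card e = 2" "e \<subseteq> V" using assms unfolding graph_def by auto
    then obtain a b where ab: "e = {a, b}" "a \<noteq> b" by (auto simp: card_2_iff)
    then have "f a \<noteq> f b" using proper_colouringD[OF f] e by simp
    moreover have "a \<in> V - S" "b \<in> V - S" using ab \<open>e \<subseteq> V\<close> e(2) by auto
    ultimately have "e \<inter> A = {a} \<and> e \<inter> B = {b} \<or> e \<inter> A = {b} \<and> e \<inter> B = {a}"
      unfolding A_def B_def ab(1) by auto
    then show ?thesis by auto
  qed
  moreover have "A \<inter> B = {}" "A \<union> B = V - S" unfolding A_def B_def by auto
  ultimately show "odd_cycle_transversal V E S"
    unfolding odd_cycle_transversal_def bipartite_def using S by blast
qed

lemma internal_vertices_conv_nth:
  "internal_vertices P = {P ! i | i. 0 < i \<and> i < length P - 1}"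
  unfolding internal_vertices_def set_conv_nth
proof safe
  fix k assume "k < length (butlast (tl P))"
  then show "\<exists>i. butlast (tl P) ! k = P ! i \<and> 0 < i \<and> i < length P - 1"
    by (intro exI[of _ "Suc k"]) (simp add: nth_butlast nth_tl)
next
  fix i assume "0 < i" "i < length P - 1"
  then show "\<exists>k. P ! i = butlast (tl P) ! k \<and> k < length (butlast (tl P))"
    by (intro exI[of _ "i - 1"]) (simp add: nth_butlast nth_tl)
qed

lemma edge_at_internal_vertex:
  assumes G: "graph V E" and P: "is_path V E P" and w: "w \<in> internal_vertices P"
    and deg: "degree E w = 2" and e: "e \<in> E" "w \<in> e"
  shows "\<exists>i. Suc i < length P \<and> e = {P ! i, P ! Suc i}"
proof -
  obtain j where j: "0 < j" "j < length P - 1" "w = P ! j"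
    using w unfolding internal_vertices_conv_nth by blast
  have j': "Suc (j - 1) = j" "Suc (j - 1) < length P" "Suc j < length P" using j by auto
  let ?in = "{P ! (j - 1), P ! j}" and ?out = "{P ! j, P ! Suc j}"
  have edges: "?in \<in> E" "?out \<in> E"
    using P j' unfolding is_path_def by (metis, simp)
  have "P ! (j - 1) \<noteq> P ! j" "P ! (j - 1) \<noteq> P ! Suc j"
    using P j' unfolding is_path_def by (simp_all add: nth_eq_iff_index_eq)
  then have "card {?in, ?out} = 2" by (simp add: doubleton_eq_iff)
  moreover have "finite {e \<in> E. w \<in> e}"
  proof -
    have "E \<subseteq> Pow V" "finite V" using G unfolding graph_def by auto
    then show ?thesis by (simp add: finite_subset)
  qed
  moreover have "{?in, ?out} \<subseteq> {e \<in> E. w \<in> e}" using edges j by auto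
  ultimately have "{?in, ?out} = {e \<in> E. w \<in> e}"
    using deg unfolding degree_def by (intro card_seteq) simp_all
  then have "e = ?in \<or> e = ?out" using e by blast
  then show ?thesis using j' by (metis (no_types, lifting))
qed

lemma set_subset_hd_last_internal_vertices:
  "set P \<subseteq> {hd P, last P} \<union> internal_vertices P"
proof
  fix x assume "x \<in> set P"
  then obtain i where i: "i < length P" "x = P ! i" by (auto simp: in_set_conv_nth)
  then have "P \<noteq> []" by auto
  consider "i = 0" | "i = length P - 1" | "0 < i \<and> i < length P - 1" using i by linarith
  then show "x \<in> {hd P, last P} \<union> internal_vertices P"
    by cases (use i \<open>P \<noteq> []\<close> in \<open>auto simp: hd_conv_nth last_conv_nth internal_vertices_conv_nth\<close>)
qed

lemma hd_last_notin_internal_vertices: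
  assumes "distinct P"
  shows "hd P \<notin> internal_vertices P" "last P \<notin> internal_vertices P"
  using assms
  by (cases "P = []"; force simp: internal_vertices_conv_nth hd_conv_nth last_conv_nth nth_eq_iff_index_eq)+

lemma internal_vertices_rev [simp]: "internal_vertices (rev P) = internal_vertices P"
  unfolding internal_vertices_def
  by (metis butlast_rev butlast_tl rev_rev_ident set_rev)

lemma is_path_rev: "is_path V E P \<Longrightarrow> is_path V E (rev P)"
  unfolding is_path_def
proof (intro conjI allI impI; (elim conjE)?)
  fix i assume edges: "\<forall>i. Suc i < length P \<longrightarrow> {P ! i, P ! Suc i} \<in> E"
    and i: "Suc i < length (rev P)"
  define k where "k = length P - 2 - i"
  have "Suc k < length P" "rev P ! i = P ! Suc k" "rev P ! Suc i = P ! k"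
    using i unfolding k_def by (simp_all add: rev_nth Suc_diff_Suc)
  then show "{rev P ! i, rev P ! Suc i} \<in> E" using edges by (metis insert_commute)
qed auto

lemma proper_colouring_alternates_along_path:
  assumes "is_path V E P" "proper_colouring f E S" "set P \<inter> S = {}" "i < length P"
  shows "f (P ! i) = (f (hd P) \<noteq> odd i)"
  using assms(4)
proof (induction i)
  case 0
  then show ?case by (simp add: hd_conv_nth)
next
  case (Suc i)
  have "{P ! i, P ! Suc i} \<in> E" "P ! i \<noteq> P ! Suc i"
    using assms(1) Suc.prems unfolding is_path_def by (simp_all add: nth_eq_iff_index_eq)
  moreover have "P ! i \<in> set P" "P ! Suc i \<in> set P" using Suc.prems by simp_all
  then have "{P ! i, P ! Suc i} \<inter> S = {}" using assms(3) by blast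
  ultimately have "f (P ! i) \<noteq> f (P ! Suc i)"
    using proper_colouringD[OF assms(2)] by blast
  then show ?case using Suc by auto
qed

lemma proper_colouring_path_ends:
  assumes "is_path V E P" "proper_colouring f E S" "set P \<inter> S = {}"
  shows "f (last P) = (f (hd P) \<noteq> odd (path_len P))"
  using proper_colouring_alternates_along_path[OF assms, of "length P - 1"] assms(1)
  by (simp add: is_path_def last_conv_nth path_len_def)

definition recolour_along :: "'a list \<Rightarrow> ('a \<Rightarrow> bool) \<Rightarrow> 'a \<Rightarrow> bool" where
  "recolour_along P f w = (if w \<in> internal_vertices P
     then f (hd P) \<noteq> odd (the_inv_into {..<length P} ((!) P) w) else f w)"

lemma recolour_along_outside: "w \<notin> internal_vertices P \<Longrightarrow> recolour_along P f w = f w"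
  by (simp add: recolour_along_def)

lemma recolour_along_nth:
  assumes "distinct P" "0 < i" "i < length P - 1"
  shows "recolour_along P f (P ! i) = (f (hd P) \<noteq> odd i)"
proof -
  have "P ! i \<in> internal_vertices P" using assms(2,3) unfolding internal_vertices_conv_nth by blast
  moreover have "the_inv_into {..<length P} ((!) P) (P ! i) = i"
    using assms by (simp add: the_inv_into_f_f inj_on_nth)
  ultimately show ?thesis by (simp add: recolour_along_def)
qed

lemma proper_colouring_recolour_along:
  assumes G: "graph V E" and P: "is_path V E P"
    and deg: "\<forall>x \<in> internal_vertices P. degree E x = 2"
    and f: "proper_colouring f E S" and S': "S - internal_vertices P \<subseteq> S'"
    and parity: "last P \<in> S' \<or> f (last P) = (f (hd P) \<noteq> odd (path_len P))"
  shows "proper_colouring (recolour_along P f) E S'"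
proof -
  let ?I = "internal_vertices P" and ?g = "recolour_along P f"
  have ne: "P \<noteq> []" and dist: "distinct P" using P by (simp_all add: is_path_def)
  note ends = hd_last_notin_internal_vertices[OF dist]
  have along: "?g (P ! i) = (f (hd P) \<noteq> odd i)" if i: "i < length P" "P ! i \<notin> S'" for i
  proof -
    consider "i = 0" | "0 < i \<and> i < length P - 1" | "i = length P - 1" using i(1) by linarith
    then show ?thesis
    proof cases
      case 1
      then show ?thesis using ends ne by (simp add: hd_conv_nth recolour_along_outside)
    next
      case 2
      then show ?thesis using dist by (simp add: recolour_along_nth)
    next
      case 3
      then have "P ! i = last P" using ne by (simp add: last_conv_nth)
      then show ?thesis using ends parity i(2) 3 by (simp add: path_len_def recolour_along_outside)
    qed
  qed
  show ?thesis
    unfolding proper_colouring_def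
  proof (intro ballI impI)
    fix e a b assume e: "e \<in> E" "e \<inter> S' = {}" and ab: "a \<in> e" "b \<in> e" "a \<noteq> b"
    show "?g a \<noteq> ?g b"
    proof (cases "e \<inter> ?I = {}")
      case True
      then have "e \<inter> S = {}" using e(2) S' by blast
      with ab have "f a \<noteq> f b" by (intro proper_colouringD[OF f e(1)])
      moreover have "a \<notin> ?I" "b \<notin> ?I" using True ab by auto
      ultimately show ?thesis by (simp add: recolour_along_outside)
    next
      case False
      then obtain w where "w \<in> e" "w \<in> ?I" by blast
      then obtain i where i: "Suc i < length P" "e = {P ! i, P ! Suc i}"
        using edge_at_internal_vertex[OF G P] deg e(1) by blast
      then have "?g (P ! i) \<noteq> ?g (P ! Suc i)" using along e(2) by auto
      moreover have "a = P ! i \<and> b = P ! Suc i \<or> a = P ! Suc i \<and> b = P ! i"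
        using ab i(2) by blast
      ultimately show ?thesis by auto
    qed
  qed
qed

text \<open>Recolouring along the reversed path handles the case where only the first endpoint is deleted.\<close>
lemma recolour_path:
  assumes G: "graph V E" and P: "is_path V E P" and u: "hd P = u" and v: "last P = v"
    and deg: "\<forall>x \<in> internal_vertices P. degree E x = 2"
    and f: "proper_colouring f E S" and S': "S - internal_vertices P \<subseteq> S'"
    and parity: "u \<in> S' \<or> v \<in> S' \<or> f v = (f u \<noteq> odd (path_len P))"
  obtains g where "proper_colouring g E S'" "\<forall>w. w \<notin> internal_vertices P \<longrightarrow> g w = f w"
proof (cases "v \<in> S' \<or> f v = (f u \<noteq> odd (path_len P))")
  case True
  then have "proper_colouring (recolour_along P f) E S'"
    using proper_colouring_recolour_along[OF G P deg f S'] u v by blast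
  then show thesis by (rule that) (simp add: recolour_along_outside)
next
  case False
  then have "u \<in> S'" using parity by blast
  then have "proper_colouring (recolour_along (rev P) f) E S'"
    using proper_colouring_recolour_along[OF G is_path_rev[OF P]] deg f S' u v
    by (simp add: last_rev)
  then show thesis by (rule that) (simp add: recolour_along_outside)
qed

lemma card_insert_Diff_less:
  assumes "finite S" "x \<in> S \<inter> I" "y \<in> S \<inter> I" "x \<noteq> y"
  shows "card (insert v (S - I)) < card S"
proof -
  have "card (insert v (S - I)) \<le> Suc (card (S - I))" using assms(1) by (simp add: card_insert_if)
  moreover have "card (S - I) \<le> card (S - {x, y})" using assms by (intro card_mono) auto
  moreover have "card (S - {x, y}) = card S - 2" using assms by (simp add: card_Diff_subset)
  moreover have "2 \<le> card S" using assms card_mono[of S "{x, y}"] by auto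
  ultimately show ?thesis by linarith
qed

locale parallel_paths =
  fixes V :: "'a set" and E :: "'a set set" and P1 P2 :: "'a list" and u v :: 'a
  assumes graph: "graph V E"
    and path1: "is_path V E P1" "hd P1 = u" "last P1 = v"
    and path2: "is_path V E P2" "hd P2 = u" "last P2 = v"
    and internally_disjoint: "internal_vertices P1 \<inter> set P2 = {}"
    and parity: "even (path_len P1) = even (path_len P2)"
    and degree_two: "\<forall>x \<in> internal_vertices P1 \<union> internal_vertices P2. degree E x = 2"
begin

abbreviation inner_vertices :: "'a set" where
  "inner_vertices \<equiv> internal_vertices P1 \<union> internal_vertices P2"

lemma ends_notin_inner_vertices: "u \<notin> inner_vertices" "v \<notin> inner_vertices"
proof -
  have "distinct P1" "distinct P2" using path1(1) path2(1) by (simp_all add: is_path_def)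
  then show "u \<notin> inner_vertices" "v \<notin> inner_vertices"
    using hd_last_notin_internal_vertices[of P1] hd_last_notin_internal_vertices[of P2] path1 path2
    by auto
qed

lemma odd_cycle_transversal_recolouring_inner_vertices:
  assumes f: "proper_colouring f E S"
    and S': "S - inner_vertices \<subseteq> S'" "S' \<subseteq> V"
    and ends: "u \<in> S' \<or> v \<in> S' \<or> f v = (f u \<noteq> odd (path_len P1))"
  shows "odd_cycle_transversal V E S'"
proof -
  let ?S1 = "S' \<union> (S \<inter> internal_vertices P2)"
  obtain g where g: "proper_colouring g E ?S1" "\<forall>w. w \<notin> internal_vertices P1 \<longrightarrow> g w = f w"
    using recolour_path[OF graph path1 _ f, of ?S1] degree_two S'(1) ends by blast
  have "u \<in> S' \<or> v \<in> S' \<or> g v = (g u \<noteq> odd (path_len P2))"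
    using g(2) ends parity ends_notin_inner_vertices by auto
  then obtain h where "proper_colouring h E S'"
    using recolour_path[OF graph path2 _ g(1), of S'] degree_two by blast
  then show ?thesis using odd_cycle_transversal_iff_proper_colouring[OF graph] S'(2) by blast
qed

lemma min_odd_cycle_transversal_avoids_inner_vertices_if_ends_fit:
  assumes min: "min_odd_cycle_transversal V E S" and f: "proper_colouring f E S"
    and ends: "u \<in> S \<or> v \<in> S \<or> f v = (f u \<noteq> odd (path_len P1))"
  shows "S \<inter> inner_vertices = {}"
proof -
  have SV: "S \<subseteq> V" using min by (simp add: min_odd_cycle_transversal_def odd_cycle_transversal_def)
  then have "finite S" using graph unfolding graph_def by (auto intro: finite_subset)
  have "u \<in> S - inner_vertices \<or> v \<in> S - inner_vertices \<or> f v = (f u \<noteq> odd (path_len P1))"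
    using ends ends_notin_inner_vertices by blast
  then have "odd_cycle_transversal V E (S - inner_vertices)"
    using odd_cycle_transversal_recolouring_inner_vertices[OF f] SV by blast
  then have "card S \<le> card (S - inner_vertices)" using min by (simp add: min_odd_cycle_transversal_def)
  then have "S - inner_vertices = S" using \<open>finite S\<close> by (intro card_seteq) auto
  then show ?thesis by blast
qed

lemma min_odd_cycle_transversal_avoids_a_path:
  assumes min: "min_odd_cycle_transversal V E S" and "u \<notin> S" "v \<notin> S"
  shows "set P1 \<inter> S = {} \<or> set P2 \<inter> S = {}"
proof (rule ccontr)
  assume "\<not> ?thesis"
  then obtain x y where xy: "x \<in> S" "x \<in> set P1" "y \<in> S" "y \<in> set P2" by blast
  then have "x \<in> S \<inter> internal_vertices P1" "y \<in> S \<inter> internal_vertices P2"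
    using set_subset_hd_last_internal_vertices[of P1] set_subset_hd_last_internal_vertices[of P2]
      path1 path2 assms(2,3) by auto
  moreover have "x \<noteq> y" using calculation internally_disjoint xy(4) by blast
  moreover have SV: "S \<subseteq> V" and oct: "odd_cycle_transversal V E S"
    using min by (simp_all add: min_odd_cycle_transversal_def odd_cycle_transversal_def)
  moreover have "finite S" using SV graph unfolding graph_def by (auto intro: finite_subset)
  ultimately have "card (insert v (S - inner_vertices)) < card S"
    using card_insert_Diff_less[of S x inner_vertices y v] by blast
  moreover obtain f where "proper_colouring f E S"
    using oct odd_cycle_transversal_iff_proper_colouring[OF graph] by blast
  moreover have "v \<in> V" using path1 unfolding is_path_def by auto
  ultimately show False
    using odd_cycle_transversal_recolouring_inner_vertices[of f S "insert v (S - inner_vertices)"] SV min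
    unfolding min_odd_cycle_transversal_def by fastforce
qed

lemma min_odd_cycle_transversal_avoids_inner_vertices:
  assumes min: "min_odd_cycle_transversal V E S"
  shows "S \<inter> inner_vertices = {}"
proof -
  obtain f where f: "proper_colouring f E S"
    using min odd_cycle_transversal_iff_proper_colouring[OF graph]
    unfolding min_odd_cycle_transversal_def by blast
  consider "u \<in> S \<or> v \<in> S" | "set P1 \<inter> S = {}" | "set P2 \<inter> S = {}"
    using min_odd_cycle_transversal_avoids_a_path[OF min] by blast
  then have "u \<in> S \<or> v \<in> S \<or> f v = (f u \<noteq> odd (path_len P1))"
  proof cases
    case 1
    then show ?thesis by blast
  next
    case 2
    then show ?thesis using proper_colouring_path_ends[OF path1(1) f] path1 by simp
  next
    case 3
    then show ?thesis using proper_colouring_path_ends[OF path2(1) f] path2 parity by simp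
  qed
  then show ?thesis by (rule min_odd_cycle_transversal_avoids_inner_vertices_if_ends_fit[OF min f])
qed

end

theorem mainTheorem14:
  fixes V :: "'a set" and E :: "'a set set" and P1 P2 :: "'a list" and u v :: 'a and S :: "'a set"
  assumes "graph V E"
    and "is_path V E P1" and "is_path V E P2"
    and "hd P1 = u" and "last P1 = v" and "hd P2 = u" and "last P2 = v"
    and "internal_vertices P1 \<inter> set P2 = {}" and "internal_vertices P2 \<inter> set P1 = {}"
    and "even (path_len P1) = even (path_len P2)"
    and "\<forall>x \<in> internal_vertices P1 \<union> internal_vertices P2. degree E x = 2"
    and "min_odd_cycle_transversal V E S"
  shows "S \<inter> (set P1 \<union> set P2) \<subseteq> {u, v}"
proof -
  interpret parallel_paths V E P1 P2 u v
    using assms(1-8,10,11) by unfold_locales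
  have "S \<inter> inner_vertices = {}" using min_odd_cycle_transversal_avoids_inner_vertices[OF assms(12)] .
  then show ?thesis
    using set_subset_hd_last_internal_vertices[of P1] set_subset_hd_last_internal_vertices[of P2]
      assms(4-7) by blast
qed

end
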